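(* Assume Assumption A1(2) and Assumption A2 (see context), and let $0<\eta_s\le\eta_{\infty,2}$ for all $s\ge0$. Then for every $t\ge1$, \[\mathbb E\big[\|\tilde\theta^{(\mathrm{fl})}_t\|^2\big]\le\sum_{s=1}^t\exp\Big(-2a\sum_{i=s+1}^t\eta_iH_i\Big)\Big(H_s\eta_s^2\wedge\frac{\eta_s}{a}\Big)\frac{\bar\sigma_\varepsilon^2}{N},\qquad\tilde\theta^{(\mathrm{fl})}_t=\sum_{s=1}^t\prod_{i=s+1}^t\Gamma^{\mathrm{avg}}_i\,\varphi^{\mathrm{avg}}_s.\]
   Context: Setting: $N$ agents, dimension $d$. For each agent $c$: distribution $\pi_c$ on $(\mathsf Z,\mathcal Z)$, measurable $\mathbf A^c,\mathbf b^c$, $\bar{\mathbf A}^c=\mathbb E_{\pi_c}[\mathbf A^c(Z)]$, $\bar{\mathbf b}^c=\mathbb E_{\pi_c}[\mathbf b^c(Z)]$; $\bar{\mathbf A}^c\theta^c_\star=\bar{\mathbf b}^c$; $\varepsilon^c(z)=(\mathbf A^c(z)-\bar{\mathbf A}^c)\theta^c_\star-(\mathbf b^c(z)-\bar{\mathbf b}^c)$; $\Sigma^c_\varepsilon=\mathbb E_{\pi_c}[\varepsilon^c(Z)\varepsilon^c(Z)^\top]$, $\bar\sigma^2_\varepsilon=N^{-1}\sum_c\mathrm{Tr}(\Sigma^c_\varepsilon)$. Assumption A1(p): each $-\bar{\mathbf A}^c$ Hurwitz; there exist $a>0,\eta_{\infty,p}>0$, $\eta_{\infty,p}a\le1/2$,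 with $\mathbb E^{1/p}_{Z\sim\pi_c}[\|(I-\eta\mathbf A^c(Z))u\|^p]\le(1-\eta a)\|u\|$ for all $0<\eta<\eta_{\infty,p}$, $u$. Assumption A2: samples $Z^c_{s,h}$ ($1\le h\le H_s$) independent with $Z^c_{s,h}\sim\pi_c$; $\max_c\sup_z\|\varepsilon^c(z)\|<\infty$, $\max_c\sup_z\max(\|\mathbf A^c(z)\|,\|\mathbf A^c(z)-\bar{\mathbf A}^c\|)<\infty$. $H_s\in\mathbb N$ are local step numbers. $\Gamma^c_{s,l:r}=(I-\eta_s\mathbf A^c(Z^c_{s,r}))\cdots(I-\eta_s\mathbf A^c(Z^c_{s,l}))$ ($I$ if $l>r$), $\Gamma^{\mathrm{avg}}_s=N^{-1}\sum_c\Gamma^c_{s,1:H_s}$, $\prod_{i=s+1}^t\Gamma^{\mathrm{avg}}_i=\Gamma^{\mathrm{avg}}_t\cdots\Gamma^{\mathrm{avg}}_{s+1}$; $\varphi^{\mathrm{avg}}_s=-N^{-1}\sum_c\sum_{h=1}^{H_s}\eta_s\Gamma^c_{s,h+1:H_s}\varepsilon^c(Z^c_{s,h})$. *)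

theory Defs
  imports "HOL-Probability.Probability"
begin

text \<open>Matrices are real^'d^'d, vectors real^'d (Euclidean norm). Agents are indexed by c < N.\<close>

definition mtrace :: "real^'d^'d \<Rightarrow> real" where
  "mtrace M = (\<Sum>i\<in>UNIV. M $ i $ i)"

definition outer :: "real^'d \<Rightarrow> real^'d^'d" where
  "outer v = (\<chi> i j. v $ i * v $ j)"

definition hurwitz :: "real^'d^'d \<Rightarrow> bool" where
  "hurwitz M \<longleftrightarrow> (\<forall>(lam::complex) (v::complex^'d). v \<noteq> 0 \<and>
      (\<chi> i j. complex_of_real (M $ i $ j)) *v v = lam *s v \<longrightarrow> Re lam < 0)"

definition Abar :: "(nat \<Rightarrow> 'z measure) \<Rightarrow> (nat \<Rightarrow> 'z \<Rightarrow> real^'d^'d) \<Rightarrow> nat \<Rightarrow> real^'d^'d" where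
  "Abar \<pi> A c = integral\<^sup>L (\<pi> c) (A c)"

definition bbar :: "(nat \<Rightarrow> 'z measure) \<Rightarrow> (nat \<Rightarrow> 'z \<Rightarrow> real^'d) \<Rightarrow> nat \<Rightarrow> real^'d" where
  "bbar \<pi> b c = integral\<^sup>L (\<pi> c) (b c)"

definition eps :: "(nat \<Rightarrow> 'z measure) \<Rightarrow> (nat \<Rightarrow> 'z \<Rightarrow> real^'d^'d) \<Rightarrow> (nat \<Rightarrow> 'z \<Rightarrow> real^'d)
    \<Rightarrow> (nat \<Rightarrow> real^'d) \<Rightarrow> nat \<Rightarrow> 'z \<Rightarrow> real^'d" where
  "eps \<pi> A b \<theta>s c z = (A c z - Abar \<pi> A c) *v \<theta>s c - (b c z - bbar \<pi> b c)"

definition Sigma_eps where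
  "Sigma_eps \<pi> A b \<theta>s c = integral\<^sup>L (\<pi> c) (\<lambda>z. outer (eps \<pi> A b \<theta>s c z))"

definition sigma_bar_sq where
  "sigma_bar_sq N \<pi> A b \<theta>s = (1 / real N) * (\<Sum>c<N. mtrace (Sigma_eps \<pi> A b \<theta>s c))"

text \<open>Ordered product F r ** ... ** F l, identity if l > r.\<close>
definition lprod :: "(nat \<Rightarrow> real^'d^'d) \<Rightarrow> nat \<Rightarrow> nat \<Rightarrow> real^'d^'d" where
  "lprod F l r = fold (\<lambda>i acc. F i ** acc) [l..<Suc r] (mat 1)"

definition Gam :: "(nat \<Rightarrow> 'z \<Rightarrow> real^'d^'d) \<Rightarrow> (nat \<Rightarrow> nat \<Rightarrow> nat \<Rightarrow> 'z) \<Rightarrow> (nat \<Rightarrow> real)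
    \<Rightarrow> nat \<Rightarrow> nat \<Rightarrow> nat \<Rightarrow> nat \<Rightarrow> real^'d^'d" where
  "Gam A Z \<eta> c s l r = lprod (\<lambda>h. mat 1 - \<eta> s *\<^sub>R A c (Z c s h)) l r"

definition Gavg where
  "Gavg N A Z \<eta> H s = (1 / real N) *\<^sub>R (\<Sum>c<N. Gam A Z \<eta> c s 1 (H s))"

definition phiavg where
  "phiavg N \<pi> A b \<theta>s Z \<eta> H s = - ((1 / real N) *\<^sub>R
     (\<Sum>c<N. \<Sum>h=1..H s. \<eta> s *\<^sub>R (Gam A Z \<eta> c s (h+1) (H s) *v eps \<pi> A b \<theta>s c (Z c s h))))"

definition theta_fl where
  "theta_fl N \<pi> A b \<theta>s Z \<eta> H t =
     (\<Sum>s=1..t. lprod (Gavg N A Z \<eta> H) (s+1) t *v phiavg N \<pi> A b \<theta>s Z \<eta> H s)"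

end

(*
  Write theta_t for the aggregated fluctuation.  It satisfies theta_t = G_t theta_(t-1) + phi_t, where
  theta_(t-1) is a bounded function of the samples of rounds before t, while the averaged product
  G_t = Gamma^avg_t and the averaged noise phi_t = phi^avg_t are functions of the samples of round t.
  Since theta_(t-1) is centred and independent of round t, the cross term vanishes and
  E |theta_t|^2 = E |G_t theta_(t-1)|^2 + E |phi_t|^2.

  For the first term, Jensen's inequality over the agents and A1 applied one local step at a time
  (each step matrix is independent of everything it multiplies) give the factor
  (1 - eta a)^(2H) <= exp (-2 a eta H).  For the second, the local noise u_k = sum_h Gamma_(h+1:k) eps(Z_h)
  of an agent obeys u_(k+1) = (I - eta A(Z_(k+1))) u_k + eps(Z_(k+1)), where u_k is centred and
  independent of Z_(k+1), so E |u_k|^2 <= min k (1/(eta a)) tr Sigma; the agents are independent, whence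
  E |phi_t|^2 <= min (H eta^2) (eta/a) sigma^2 / N.  Unrolling the recursion in t gives the bound.
*)

theory Submission
  imports Defs
begin

lemma power_one_minus_sq_le_exp:
  fixes x :: real
  assumes "0 \<le> x" "x \<le> 1"
  shows "((1 - x)\<^sup>2) ^ n \<le> exp (- 2 * (x * real n))"
proof -
  have "(1 - x)\<^sup>2 \<le> (exp (- x))\<^sup>2"
    by (rule power_mono) (use assms exp_ge_add_one_self[of "- x"] in auto)
  then have "((1 - x)\<^sup>2) ^ n \<le> ((exp (- x))\<^sup>2) ^ n"
    by (rule power_mono) simp
  also have "\<dots> = exp (- 2 * (x * real n))"
    by (simp flip: exp_of_nat_mult power_mult add: mult_ac)
  finally show ?thesis .
qed

lemma min_contraction_step:
  fixes x k :: real
  assumes "0 < x" "x \<le> 1" "0 \<le> k"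
  shows "(1 - x)\<^sup>2 * min k (1 / x) + 1 \<le> min (k + 1) (1 / x)"
proof -
  have q: "0 \<le> (1 - x)\<^sup>2" "(1 - x)\<^sup>2 \<le> 1"
    using assms by (auto simp: power2_eq_square mult_le_one)
  have "(1 - x)\<^sup>2 * min k (1 / x) \<le> k"
    using mult_right_mono[OF q(2), of "min k (1 / x)"] assms by simp
  moreover have "(1 - x)\<^sup>2 * min k (1 / x) + 1 \<le> 1 / x"
  proof -
    have "(1 - x)\<^sup>2 * min k (1 / x) \<le> (1 - x)\<^sup>2 * (1 / x)"
      by (rule mult_left_mono[OF min.cobounded2 q(1)])
    moreover have "(1 - x)\<^sup>2 * (1 / x) + 1 = 1 / x - (1 - x)"
      using assms by (simp add: field_simps power2_eq_square)
    ultimately show ?thesis using assms by linarith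
  qed
  ultimately show ?thesis by simp
qed

lemma norm_sq_average_le:
  fixes v :: "nat \<Rightarrow> 'a::real_normed_vector"
  assumes "N \<ge> 1"
  shows "(norm ((1 / real N) *\<^sub>R (\<Sum>c<N. v c)))\<^sup>2 \<le> (1 / real N) * (\<Sum>c<N. (norm (v c))\<^sup>2)"
proof -
  have "norm ((1 / real N) *\<^sub>R (\<Sum>c<N. v c)) \<le> (1 / real N) * (\<Sum>c<N. norm (v c))"
    using norm_sum[of v "{..<N}"] by (simp add: divide_right_mono)
  then have "(norm ((1 / real N) *\<^sub>R (\<Sum>c<N. v c)))\<^sup>2 \<le> (1 / real N)\<^sup>2 * (\<Sum>c<N. norm (v c))\<^sup>2"
    by (metis norm_ge_zero power_mono power_mult_distrib)
  also have "\<dots> \<le> (1 / real N)\<^sup>2 * ((\<Sum>c<N. (norm (v c))\<^sup>2) * real N)"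
    using sum_squared_le_sum_of_squares[of "\<lambda>c. norm (v c)" "{..<N}"] by (intro mult_left_mono) auto
  also have "\<dots> = (1 / real N) * (\<Sum>c<N. (norm (v c))\<^sup>2)"
    using assms by (simp add: power2_eq_square)
  finally show ?thesis .
qed

lemma discounted_sum_Suc:
  fixes g m :: "nat \<Rightarrow> real"
  shows "(\<Sum>s=1..Suc t. exp (k * (\<Sum>i=s+1..Suc t. g i)) * m s)
    = exp (k * g (Suc t)) * (\<Sum>s=1..t. exp (k * (\<Sum>i=s+1..t. g i)) * m s) + m (Suc t)"
proof -
  have "exp (k * (\<Sum>i=s+1..Suc t. g i)) = exp (k * g (Suc t)) * exp (k * (\<Sum>i=s+1..t. g i))"
    if "s \<le> t" for s
    using that by (simp add: algebra_simps flip: exp_add)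
  then show ?thesis
    by (simp add: sum_distrib_left mult.assoc)
qed

lemma matrix_vector_mult_sum_right:
  "(P::real^'n^'m) *v (\<Sum>x\<in>T. f x) = (\<Sum>x\<in>T. P *v f x)"
  by (simp add: linear_sum)

lemma matrix_vector_mult_sum_left:
  "(\<Sum>x\<in>T. P x) *v (v::real^'n) = (\<Sum>x\<in>T. P x *v v)"
  by (induction T rule: infinite_finite_induct) (auto simp: matrix_vector_mult_add_rdistrib)

lemma bounded_linear_matrix_vector_mult_left: "bounded_linear (\<lambda>P::real^'n^'m. P *v x)"
  by (subst linear_conv_bounded_linear[symmetric], rule linearI)
    (simp_all add: matrix_vector_mult_add_rdistrib scaleR_matrix_vector_assoc)

lemma norm_sq_matrix_vector_mult:
  "(norm ((P::real^'n^'m) *v x))\<^sup>2 = (\<Sum>i\<in>UNIV. \<Sum>j\<in>UNIV. \<Sum>l\<in>UNIV. (P $ i $ j * P $ i $ l) * (x $ j * x $ l))"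
  by (simp add: power2_norm_eq_inner inner_vec_def matrix_vector_mult_def sum_product mult_ac)

lemma norm_sq_add_inner: "(norm (x + y))\<^sup>2 = (norm x)\<^sup>2 + 2 * (x \<bullet> y) + (norm (y::'a::real_inner))\<^sup>2"
  by (simp add: power2_norm_eq_inner inner_add_left inner_add_right inner_commute)

lemma norm_sq_step_matrix_vector:
  "(norm ((mat 1 - e *\<^sub>R (P::real^'n^'n)) *v u))\<^sup>2
    = (norm u)\<^sup>2 - 2 * e * (u \<bullet> (P *v u)) + e\<^sup>2 * (norm (P *v u))\<^sup>2"
proof -
  have step: "(mat 1 - e *\<^sub>R P) *v u = u - e *\<^sub>R (P *v u)"
    by (simp add: matrix_vector_mult_diff_rdistrib scaleR_matrix_vector_assoc)
  show ?thesis
    unfolding step power2_norm_eq_inner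
    by (simp add: inner_commute algebra_simps power2_eq_square)
qed

lemma norm_sq_vec: "(norm v)\<^sup>2 = (\<Sum>i\<in>UNIV. (norm (v $ i))\<^sup>2)"
  by (simp add: norm_vec_def L2_set_def sum_nonneg)

lemma norm_matrix_vector_mult_le: "norm ((P::real^'n^'m) *v x) \<le> norm P * norm x"
proof -
  have "(norm (P *v x))\<^sup>2 = (\<Sum>i\<in>UNIV. (P $ i \<bullet> x)\<^sup>2)"
    by (simp add: norm_sq_vec[of "P *v x"] matrix_vector_mul_component)
  also have "\<dots> \<le> (\<Sum>i\<in>UNIV. (norm (P $ i))\<^sup>2 * (norm x)\<^sup>2)"
  proof (intro sum_mono)
    fix i
    have "\<bar>P $ i \<bullet> x\<bar> \<le> norm (P $ i) * norm x"
      by (rule Cauchy_Schwarz_ineq2)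
    then show "(P $ i \<bullet> x)\<^sup>2 \<le> (norm (P $ i))\<^sup>2 * (norm x)\<^sup>2"
      by (metis abs_ge_zero power2_abs power_mono power_mult_distrib)
  qed
  also have "\<dots> = (norm P * norm x)\<^sup>2"
    by (simp add: norm_sq_vec[of P] power_mult_distrib sum_distrib_right)
  finally show ?thesis
    by (rule power2_le_imp_le) simp
qed

lemma outer_nth: "outer v $ i = v $ i *\<^sub>R v"
  by (simp add: outer_def vec_eq_iff)

lemma norm_outer: "norm (outer v) = (norm v)\<^sup>2"
proof (rule power2_eq_imp_eq)
  have "(\<Sum>i\<in>UNIV. (v $ i)\<^sup>2) = (norm v)\<^sup>2"
    by (simp add: norm_sq_vec[of v])
  then show "(norm (outer v))\<^sup>2 = ((norm v)\<^sup>2)\<^sup>2"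
    by (simp add: norm_sq_vec[of "outer v"] outer_nth power_mult_distrib flip: sum_distrib_right)
qed simp_all

lemma mtrace_outer: "mtrace (outer v) = (norm v)\<^sup>2"
  by (simp add: mtrace_def outer_def power2_norm_eq_inner inner_vec_def)

lemma bounded_linear_mtrace: "bounded_linear (mtrace :: real^'n^'n \<Rightarrow> real)"
  unfolding mtrace_def
  by (intro bounded_linear_sum bounded_linear_compose[OF bounded_linear_vec_nth bounded_linear_vec_nth])

lemma lprod_Suc: "l \<le> Suc r \<Longrightarrow> lprod F l (Suc r) = F (Suc r) ** lprod F l r"
  by (simp add: lprod_def)

lemma Gam_Suc:
  "l \<le> Suc r \<Longrightarrow> Gam A Z \<eta> c s l (Suc r) = (mat 1 - \<eta> s *\<^sub>R A c (Z c s (Suc r))) ** Gam A Z \<eta> c s l r"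
  by (simp add: Gam_def lprod_Suc)

lemma theta_fl_0: "theta_fl N \<pi> A b \<theta>s Z \<eta> H 0 = 0"
  by (simp add: theta_fl_def)

lemma theta_fl_Suc:
  "theta_fl N \<pi> A b \<theta>s Z \<eta> H (Suc t)
     = Gavg N A Z \<eta> H (Suc t) *v theta_fl N \<pi> A b \<theta>s Z \<eta> H t + phiavg N \<pi> A b \<theta>s Z \<eta> H (Suc t)"
proof -
  let ?G = "Gavg N A Z \<eta> H" and ?p = "phiavg N \<pi> A b \<theta>s Z \<eta> H"
  have "lprod ?G (s + 1) (Suc t) *v ?p s = ?G (Suc t) *v (lprod ?G (s + 1) t *v ?p s)" if "s \<le> t" for s
    using that by (simp add: lprod_Suc matrix_vector_mul_assoc)
  then show ?thesis
    by (simp add: theta_fl_def matrix_vector_mult_sum_right lprod_def)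
qed

section \<open>Bounded functions of independent samples\<close>

locale indep_samples = prob_space M
  for M :: "'w measure" +
  fixes S :: "'z measure" and Z :: "'i \<Rightarrow> 'w \<Rightarrow> 'z" and I :: "'i set"
  assumes indep_samples: "indep_vars (\<lambda>_. S) Z I"
begin

(* Boundedness keeps all finite sums and products of such functions integrable. *)
definition bounded_fun_of :: "'i set \<Rightarrow> ('w \<Rightarrow> real) \<Rightarrow> bool" where
  "bounded_fun_of J f \<longleftrightarrow> J \<subseteq> I \<and> (\<exists>K. \<forall>\<omega>\<in>space M. \<bar>f \<omega>\<bar> \<le> K) \<and>
     (\<exists>g\<in>borel_measurable (\<Pi>\<^sub>M i\<in>J. S). \<forall>\<omega>\<in>space M. f \<omega> = g (\<lambda>i\<in>J. Z i \<omega>))"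

lemma measurable_samples: "i \<in> I \<Longrightarrow> Z i \<in> measurable M S"
  using indep_samples by (auto simp: indep_vars_def)

lemma measurable_restrict_samples: "J \<subseteq> I \<Longrightarrow> (\<lambda>\<omega>. \<lambda>i\<in>J. Z i \<omega>) \<in> measurable M (\<Pi>\<^sub>M i\<in>J. S)"
  by (intro measurable_restrict measurable_samples) auto

lemma bounded_fun_ofE:
  assumes "bounded_fun_of J f"
  obtains K g where "J \<subseteq> I" "\<And>\<omega>. \<omega> \<in> space M \<Longrightarrow> \<bar>f \<omega>\<bar> \<le> K"
    "g \<in> borel_measurable (\<Pi>\<^sub>M i\<in>J. S)" "\<And>\<omega>. \<omega> \<in> space M \<Longrightarrow> f \<omega> = g (\<lambda>i\<in>J. Z i \<omega>)"
  using assms unfolding bounded_fun_of_def by blast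

lemma bounded_fun_of_subset: "bounded_fun_of J f \<Longrightarrow> J \<subseteq> I"
  by (simp add: bounded_fun_of_def)

lemma bounded_fun_of_measurable:
  assumes "bounded_fun_of J f"
  shows "f \<in> borel_measurable M"
proof -
  obtain g where J: "J \<subseteq> I" and g: "g \<in> borel_measurable (\<Pi>\<^sub>M i\<in>J. S)"
    and f: "\<And>\<omega>. \<omega> \<in> space M \<Longrightarrow> f \<omega> = g (\<lambda>i\<in>J. Z i \<omega>)"
    using assms by (rule bounded_fun_ofE) blast
  have "(\<lambda>\<omega>. g (\<lambda>i\<in>J. Z i \<omega>)) \<in> borel_measurable M"
    using measurable_comp[OF measurable_restrict_samples[OF J] g] by (simp add: comp_def)
  then show ?thesis
    using f by (simp cong: measurable_cong)
qed

lemma bounded_fun_of_integrable: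
  assumes "bounded_fun_of J f"
  shows "integrable M f"
proof -
  obtain K where "\<And>\<omega>. \<omega> \<in> space M \<Longrightarrow> \<bar>f \<omega>\<bar> \<le> K"
    using assms by (rule bounded_fun_ofE) blast
  then show ?thesis
    by (intro integrable_const_bound[where B=K] bounded_fun_of_measurable[OF assms]) auto
qed

lemma bounded_fun_of_mono:
  assumes f: "bounded_fun_of J f" and "J \<subseteq> J'" "J' \<subseteq> I"
  shows "bounded_fun_of J' f"
proof -
  obtain K g where K: "\<And>\<omega>. \<omega> \<in> space M \<Longrightarrow> \<bar>f \<omega>\<bar> \<le> K" and g: "g \<in> borel_measurable (\<Pi>\<^sub>M i\<in>J. S)"
    and f: "\<And>\<omega>. \<omega> \<in> space M \<Longrightarrow> f \<omega> = g (\<lambda>i\<in>J. Z i \<omega>)"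
    using f by (rule bounded_fun_ofE) blast
  have "(\<lambda>x. g (restrict x J)) \<in> borel_measurable (\<Pi>\<^sub>M i\<in>J'. S)"
    using measurable_comp[OF measurable_restrict_subset[OF \<open>J \<subseteq> J'\<close>] g] by (simp add: comp_def)
  moreover have "f \<omega> = g (restrict (\<lambda>i\<in>J'. Z i \<omega>) J)" if "\<omega> \<in> space M" for \<omega>
    using f[OF that] \<open>J \<subseteq> J'\<close> by (simp add: Int_absorb1)
  ultimately show ?thesis
    unfolding bounded_fun_of_def using K \<open>J' \<subseteq> I\<close> by (intro conjI bexI) auto
qed

lemma bounded_fun_of_const: "J \<subseteq> I \<Longrightarrow> bounded_fun_of J (\<lambda>_. c)"
  unfolding bounded_fun_of_def by (intro conjI exI[of _ "\<bar>c\<bar>"] bexI[of _ "\<lambda>_. c"]) auto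

lemma bounded_fun_of_add:
  assumes "bounded_fun_of J f" "bounded_fun_of J g"
  shows "bounded_fun_of J (\<lambda>\<omega>. f \<omega> + g \<omega>)"
proof -
  obtain K f' where "J \<subseteq> I" and K: "\<And>\<omega>. \<omega> \<in> space M \<Longrightarrow> \<bar>f \<omega>\<bar> \<le> K"
    and "f' \<in> borel_measurable (\<Pi>\<^sub>M i\<in>J. S)" "\<And>\<omega>. \<omega> \<in> space M \<Longrightarrow> f \<omega> = f' (\<lambda>i\<in>J. Z i \<omega>)"
    using assms(1) by (rule bounded_fun_ofE) blast
  moreover obtain L g' where L: "\<And>\<omega>. \<omega> \<in> space M \<Longrightarrow> \<bar>g \<omega>\<bar> \<le> L"
    and "g' \<in> borel_measurable (\<Pi>\<^sub>M i\<in>J. S)" "\<And>\<omega>. \<omega> \<in> space M \<Longrightarrow> g \<omega> = g' (\<lambda>i\<in>J. Z i \<omega>)"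
    using assms(2) by (rule bounded_fun_ofE) blast
  moreover have "\<bar>f \<omega> + g \<omega>\<bar> \<le> K + L" if "\<omega> \<in> space M" for \<omega>
    using K[OF that] L[OF that] by linarith
  ultimately show ?thesis
    unfolding bounded_fun_of_def by (intro conjI exI[of _ "K + L"] bexI[of _ "\<lambda>x. f' x + g' x"]) auto
qed

lemma bounded_fun_of_mult:
  assumes "bounded_fun_of J f" "bounded_fun_of J g"
  shows "bounded_fun_of J (\<lambda>\<omega>. f \<omega> * g \<omega>)"
proof -
  obtain K f' where "J \<subseteq> I" and K: "\<And>\<omega>. \<omega> \<in> space M \<Longrightarrow> \<bar>f \<omega>\<bar> \<le> K"
    and "f' \<in> borel_measurable (\<Pi>\<^sub>M i\<in>J. S)" "\<And>\<omega>. \<omega> \<in> space M \<Longrightarrow> f \<omega> = f' (\<lambda>i\<in>J. Z i \<omega>)"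
    using assms(1) by (rule bounded_fun_ofE) blast
  moreover obtain L g' where L: "\<And>\<omega>. \<omega> \<in> space M \<Longrightarrow> \<bar>g \<omega>\<bar> \<le> L"
    and "g' \<in> borel_measurable (\<Pi>\<^sub>M i\<in>J. S)" "\<And>\<omega>. \<omega> \<in> space M \<Longrightarrow> g \<omega> = g' (\<lambda>i\<in>J. Z i \<omega>)"
    using assms(2) by (rule bounded_fun_ofE) blast
  moreover have "\<bar>f \<omega> * g \<omega>\<bar> \<le> K * L" if "\<omega> \<in> space M" for \<omega>
    unfolding abs_mult using K[OF that] L[OF that] by (intro mult_mono) auto
  ultimately show ?thesis
    unfolding bounded_fun_of_def by (intro conjI exI[of _ "K * L"] bexI[of _ "\<lambda>x. f' x * g' x"]) auto
qed

lemma bounded_fun_of_sum: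
  "J \<subseteq> I \<Longrightarrow> (\<And>x. x \<in> T \<Longrightarrow> bounded_fun_of J (f x)) \<Longrightarrow> bounded_fun_of J (\<lambda>\<omega>. \<Sum>x\<in>T. f x \<omega>)"
  by (induction T rule: infinite_finite_induct) (auto intro: bounded_fun_of_const bounded_fun_of_add)

lemma bounded_fun_of_sample:
  assumes "k \<in> J" "J \<subseteq> I" "F \<in> borel_measurable S" "\<And>z. z \<in> space S \<Longrightarrow> \<bar>F z\<bar> \<le> K"
  shows "bounded_fun_of J (\<lambda>\<omega>. F (Z k \<omega>))"
proof -
  have "(\<lambda>x. F (x k)) \<in> borel_measurable (\<Pi>\<^sub>M i\<in>J. S)"
    using measurable_comp[OF measurable_component_singleton[OF \<open>k \<in> J\<close>] \<open>F \<in> _\<close>] by (simp add: comp_def)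
  moreover have "\<bar>F (Z k \<omega>)\<bar> \<le> K" if "\<omega> \<in> space M" for \<omega>
    using assms measurable_space[OF measurable_samples that] by blast
  ultimately show ?thesis
    unfolding bounded_fun_of_def using assms(1,2) by (intro conjI exI[of _ K] bexI[of _ "\<lambda>x. F (x k)"]) auto
qed

lemma bounded_fun_of_integrable_mult:
  assumes "bounded_fun_of J f" "bounded_fun_of J' g"
  shows "integrable M (\<lambda>\<omega>. f \<omega> * g \<omega>)"
proof -
  have "J \<union> J' \<subseteq> I"
    using assms bounded_fun_of_subset by blast
  then have "bounded_fun_of (J \<union> J') f" "bounded_fun_of (J \<union> J') g"
    using assms by (auto intro: bounded_fun_of_mono)
  then show ?thesis
    by (intro bounded_fun_of_integrable bounded_fun_of_mult)
qed

lemma expectation_mult_indep: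
  assumes f: "bounded_fun_of J f" and g: "bounded_fun_of J' g" and "J \<inter> J' = {}"
  shows "expectation (\<lambda>\<omega>. f \<omega> * g \<omega>) = expectation f * expectation g"
proof -
  obtain f' where J: "J \<subseteq> I" and f': "f' \<in> borel_measurable (\<Pi>\<^sub>M i\<in>J. S)"
    and f_eq: "\<And>\<omega>. \<omega> \<in> space M \<Longrightarrow> f \<omega> = f' (\<lambda>i\<in>J. Z i \<omega>)"
    using f by (rule bounded_fun_ofE) blast
  obtain g' where J': "J' \<subseteq> I" and g': "g' \<in> borel_measurable (\<Pi>\<^sub>M i\<in>J'. S)"
    and g_eq: "\<And>\<omega>. \<omega> \<in> space M \<Longrightarrow> g \<omega> = g' (\<lambda>i\<in>J'. Z i \<omega>)"
    using g by (rule bounded_fun_ofE) blast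
  let ?f = "\<lambda>\<omega>. f' (\<lambda>i\<in>J. Z i \<omega>)" and ?g = "\<lambda>\<omega>. g' (\<lambda>i\<in>J'. Z i \<omega>)"
  have "indep_var borel ?f borel ?g"
    using indep_var_compose[OF indep_var_restrict[OF indep_samples \<open>J \<inter> J' = {}\<close> J J'] f' g']
    by (simp add: comp_def)
  moreover have "integrable M ?f"
    by (rule Bochner_Integration.integrable_cong[THEN iffD1, OF refl _ bounded_fun_of_integrable[OF f]])
      (simp add: f_eq)
  moreover have "integrable M ?g"
    by (rule Bochner_Integration.integrable_cong[THEN iffD1, OF refl _ bounded_fun_of_integrable[OF g]])
      (simp add: g_eq)
  ultimately have "expectation (\<lambda>\<omega>. ?f \<omega> * ?g \<omega>) = expectation ?f * expectation ?g"
    by (rule indep_var_lebesgue_integral)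
  then show ?thesis
    using f_eq g_eq by (simp cong: Bochner_Integration.integral_cong)
qed

definition vec_fun_of :: "'i set \<Rightarrow> ('w \<Rightarrow> real^'n) \<Rightarrow> bool" where
  "vec_fun_of J X \<longleftrightarrow> (\<forall>i. bounded_fun_of J (\<lambda>\<omega>. X \<omega> $ i))"

definition mat_fun_of :: "'i set \<Rightarrow> ('w \<Rightarrow> real^'n^'m) \<Rightarrow> bool" where
  "mat_fun_of J P \<longleftrightarrow> (\<forall>i. vec_fun_of J (\<lambda>\<omega>. P \<omega> $ i))"

definition centered :: "('w \<Rightarrow> real^'n) \<Rightarrow> bool" where
  "centered X \<longleftrightarrow> (\<forall>i. expectation (\<lambda>\<omega>. X \<omega> $ i) = 0)"

lemma vec_fun_of_subset: "vec_fun_of J X \<Longrightarrow> J \<subseteq> I"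
  unfolding vec_fun_of_def using bounded_fun_of_subset by blast

lemma mat_fun_of_subset: "mat_fun_of J P \<Longrightarrow> J \<subseteq> I"
  unfolding mat_fun_of_def using vec_fun_of_subset by blast

lemma vec_fun_of_mono: "vec_fun_of J X \<Longrightarrow> J \<subseteq> J' \<Longrightarrow> J' \<subseteq> I \<Longrightarrow> vec_fun_of J' X"
  unfolding vec_fun_of_def using bounded_fun_of_mono by blast

lemma mat_fun_of_mono: "mat_fun_of J P \<Longrightarrow> J \<subseteq> J' \<Longrightarrow> J' \<subseteq> I \<Longrightarrow> mat_fun_of J' P"
  unfolding mat_fun_of_def using vec_fun_of_mono by blast

lemma vec_fun_of_const: "J \<subseteq> I \<Longrightarrow> vec_fun_of J (\<lambda>_. v)"
  by (simp add: vec_fun_of_def bounded_fun_of_const)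

lemma mat_fun_of_const: "J \<subseteq> I \<Longrightarrow> mat_fun_of J (\<lambda>_. P)"
  by (simp add: mat_fun_of_def vec_fun_of_const)

lemma vec_fun_of_add: "vec_fun_of J X \<Longrightarrow> vec_fun_of J Y \<Longrightarrow> vec_fun_of J (\<lambda>\<omega>. X \<omega> + Y \<omega>)"
  by (simp add: vec_fun_of_def bounded_fun_of_add)

lemma vec_fun_of_scaleR:
  assumes "vec_fun_of J X"
  shows "vec_fun_of J (\<lambda>\<omega>. c *\<^sub>R X \<omega>)"
  using assms bounded_fun_of_mult[OF bounded_fun_of_const[OF vec_fun_of_subset[OF assms]]]
  by (simp add: vec_fun_of_def)

lemma vec_fun_of_sum:
  "J \<subseteq> I \<Longrightarrow> (\<And>x. x \<in> T \<Longrightarrow> vec_fun_of J (X x)) \<Longrightarrow> vec_fun_of J (\<lambda>\<omega>. \<Sum>x\<in>T. X x \<omega>)"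
  by (induction T rule: infinite_finite_induct) (auto intro: vec_fun_of_const vec_fun_of_add)

lemma mat_fun_of_scaleR: "mat_fun_of J P \<Longrightarrow> mat_fun_of J (\<lambda>\<omega>. c *\<^sub>R P \<omega>)"
  by (simp add: mat_fun_of_def vec_fun_of_scaleR)

lemma mat_fun_of_sum:
  "J \<subseteq> I \<Longrightarrow> (\<And>x. x \<in> T \<Longrightarrow> mat_fun_of J (P x)) \<Longrightarrow> mat_fun_of J (\<lambda>\<omega>. \<Sum>x\<in>T. P x \<omega>)"
  unfolding mat_fun_of_def by (auto intro: vec_fun_of_sum)

lemma bounded_fun_of_inner:
  assumes "vec_fun_of J X" "vec_fun_of J Y"
  shows "bounded_fun_of J (\<lambda>\<omega>. X \<omega> \<bullet> Y \<omega>)"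
  using assms vec_fun_of_subset[OF assms(1)]
  by (auto simp: inner_vec_def vec_fun_of_def intro!: bounded_fun_of_sum bounded_fun_of_mult)

lemma bounded_fun_of_norm_sq: "vec_fun_of J X \<Longrightarrow> bounded_fun_of J (\<lambda>\<omega>. (norm (X \<omega>))\<^sup>2)"
  by (simp add: power2_norm_eq_inner bounded_fun_of_inner)

lemma vec_fun_of_matrix_vector_mult:
  "mat_fun_of J P \<Longrightarrow> vec_fun_of J X \<Longrightarrow> vec_fun_of J (\<lambda>\<omega>. P \<omega> *v X \<omega>)"
  by (simp add: vec_fun_of_def [of J "\<lambda>\<omega>. P \<omega> *v X \<omega>"] matrix_vector_mul_component
      mat_fun_of_def bounded_fun_of_inner)

lemma vec_fun_of_vector_matrix_mult:
  assumes "vec_fun_of J X" "mat_fun_of J P"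
  shows "vec_fun_of J (\<lambda>\<omega>. X \<omega> v* P \<omega>)"
  using assms vec_fun_of_subset[OF assms(1)]
  by (auto simp: vec_fun_of_def mat_fun_of_def vector_matrix_mult_def
      intro!: bounded_fun_of_sum bounded_fun_of_mult)

lemma mat_fun_of_matrix_mult:
  assumes "mat_fun_of J P" "mat_fun_of J Q"
  shows "mat_fun_of J (\<lambda>\<omega>. P \<omega> ** Q \<omega>)"
  using assms mat_fun_of_subset[OF assms(1)]
  by (auto simp: vec_fun_of_def mat_fun_of_def matrix_matrix_mult_def
      intro!: bounded_fun_of_sum bounded_fun_of_mult)

lemma vec_fun_of_sample:
  fixes F :: "'z \<Rightarrow> real^'n"
  assumes "k \<in> J" "J \<subseteq> I" "F \<in> borel_measurable S" "\<And>z. z \<in> space S \<Longrightarrow> norm (F z) \<le> K"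
  shows "vec_fun_of J (\<lambda>\<omega>. F (Z k \<omega>))"
  unfolding vec_fun_of_def
proof
  fix i
  have "(\<lambda>z. F z $ i) \<in> borel_measurable S"
    using measurable_compose[OF assms(3) borel_measurable_nth] .
  moreover have "\<bar>F z $ i\<bar> \<le> K" if "z \<in> space S" for z
    using component_le_norm_cart[of "F z" i] assms(4)[OF that] by linarith
  ultimately show "bounded_fun_of J (\<lambda>\<omega>. F (Z k \<omega>) $ i)"
    by (rule bounded_fun_of_sample[OF assms(1,2)])
qed

lemma mat_fun_of_sample:
  fixes F :: "'z \<Rightarrow> real^'n^'m"
  assumes "k \<in> J" "J \<subseteq> I" "F \<in> borel_measurable S" "\<And>z. z \<in> space S \<Longrightarrow> norm (F z) \<le> K"
  shows "mat_fun_of J (\<lambda>\<omega>. F (Z k \<omega>))"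
  unfolding mat_fun_of_def
proof
  fix i
  have "(\<lambda>z. F z $ i) \<in> borel_measurable S"
    using measurable_compose[OF assms(3) borel_measurable_continuous_onI[OF
          linear_continuous_on[OF bounded_linear_vec_nth]]] .
  moreover have "norm (F z $ i) \<le> K" if "z \<in> space S" for z
    using Finite_Cartesian_Product.norm_nth_le[of "F z" i] assms(4)[OF that] by linarith
  ultimately show "vec_fun_of J (\<lambda>\<omega>. F (Z k \<omega>) $ i)"
    by (rule vec_fun_of_sample[OF assms(1,2)])
qed

lemma vec_fun_of_matrix_vector_mult_Un:
  assumes "mat_fun_of J' P" "vec_fun_of J X"
  shows "vec_fun_of (J \<union> J') (\<lambda>\<omega>. P \<omega> *v X \<omega>)"
proof -
  have "J \<union> J' \<subseteq> I"
    using assms mat_fun_of_subset vec_fun_of_subset by blast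
  then show ?thesis
    using assms by (intro vec_fun_of_matrix_vector_mult) (auto intro: mat_fun_of_mono vec_fun_of_mono)
qed

lemma centered_scaleR: "centered X \<Longrightarrow> centered (\<lambda>\<omega>. c *\<^sub>R X \<omega>)"
  by (simp add: centered_def)

lemma centered_sum:
  assumes "\<And>x. x \<in> T \<Longrightarrow> vec_fun_of J (X x)" "\<And>x. x \<in> T \<Longrightarrow> centered (X x)"
  shows "centered (\<lambda>\<omega>. \<Sum>x\<in>T. X x \<omega>)"
  unfolding centered_def
proof
  fix i
  have "integrable M (\<lambda>\<omega>. X x \<omega> $ i)" if "x \<in> T" for x
    using assms(1)[OF that] bounded_fun_of_integrable unfolding vec_fun_of_def by blast
  then show "expectation (\<lambda>\<omega>. (\<Sum>x\<in>T. X x \<omega>) $ i) = 0"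
    using assms(2) by (simp add: Bochner_Integration.integral_sum centered_def)
qed

lemma expectation_inner_indep_centered:
  assumes X: "vec_fun_of J X" "centered X" and V: "vec_fun_of J' V" and "J \<inter> J' = {}"
  shows "expectation (\<lambda>\<omega>. X \<omega> \<bullet> V \<omega>) = 0"
proof -
  have "integrable M (\<lambda>\<omega>. X \<omega> $ i * V \<omega> $ i)" for i
    by (rule bounded_fun_of_integrable_mult[of J _ J']) (use X(1) V in \<open>auto simp: vec_fun_of_def\<close>)
  then have "expectation (\<lambda>\<omega>. X \<omega> \<bullet> V \<omega>) = (\<Sum>i\<in>UNIV. expectation (\<lambda>\<omega>. X \<omega> $ i * V \<omega> $ i))"
    by (simp add: inner_vec_def)
  also have "\<dots> = 0"
    using X V expectation_mult_indep[OF _ _ \<open>J \<inter> J' = {}\<close>]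
    by (simp add: vec_fun_of_def centered_def)
  finally show ?thesis .
qed

lemma expectation_inner_matrix_vector_indep_centered:
  assumes X: "vec_fun_of J X" "centered X" and P: "mat_fun_of J' P" and V: "vec_fun_of J' V"
    and "J \<inter> J' = {}"
  shows "expectation (\<lambda>\<omega>. (P \<omega> *v X \<omega>) \<bullet> V \<omega>) = 0"
proof -
  have "(P \<omega> *v X \<omega>) \<bullet> V \<omega> = X \<omega> \<bullet> (V \<omega> v* P \<omega>)" for \<omega>
    by (metis dot_lmul_matrix inner_commute)
  moreover have "expectation (\<lambda>\<omega>. X \<omega> \<bullet> (V \<omega> v* P \<omega>)) = 0"
    using assms by (intro expectation_inner_indep_centered vec_fun_of_vector_matrix_mult)
  ultimately show ?thesis by simp
qed

lemma centered_matrix_vector_add: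
  assumes X: "vec_fun_of J X" "centered X" and P: "mat_fun_of J' P"
    and V: "vec_fun_of J' V" "centered V" and "J \<inter> J' = {}"
  shows "centered (\<lambda>\<omega>. P \<omega> *v X \<omega> + V \<omega>)"
  unfolding centered_def
proof
  fix i
  have "expectation (\<lambda>\<omega>. (P \<omega> *v X \<omega>) $ i) = 0"
    using expectation_inner_indep_centered[OF X _ \<open>J \<inter> J' = {}\<close>, of "\<lambda>\<omega>. P \<omega> $ i"] P
    by (simp add: matrix_vector_mul_component inner_commute mat_fun_of_def)
  moreover have "integrable M (\<lambda>\<omega>. (P \<omega> *v X \<omega>) $ i)" "integrable M (\<lambda>\<omega>. V \<omega> $ i)"
    using vec_fun_of_matrix_vector_mult_Un[OF P X(1)] V(1)
    by (auto simp: vec_fun_of_def intro: bounded_fun_of_integrable)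
  ultimately show "expectation (\<lambda>\<omega>. (P \<omega> *v X \<omega> + V \<omega>) $ i) = 0"
    using V by (simp add: centered_def)
qed

lemma expectation_norm_sq_matrix_vector_add:
  assumes X: "vec_fun_of J X" "centered X" and P: "mat_fun_of J' P" and V: "vec_fun_of J' V"
    and "J \<inter> J' = {}"
  shows "expectation (\<lambda>\<omega>. (norm (P \<omega> *v X \<omega> + V \<omega>))\<^sup>2)
    = expectation (\<lambda>\<omega>. (norm (P \<omega> *v X \<omega>))\<^sup>2) + expectation (\<lambda>\<omega>. (norm (V \<omega>))\<^sup>2)"
proof -
  have PX: "vec_fun_of (J \<union> J') (\<lambda>\<omega>. P \<omega> *v X \<omega>)"
    by (rule vec_fun_of_matrix_vector_mult_Un[OF P X(1)])
  have V': "vec_fun_of (J \<union> J') V"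
    using V vec_fun_of_subset[OF PX] by (auto intro: vec_fun_of_mono)
  show ?thesis
    unfolding norm_sq_add_inner
    using expectation_inner_matrix_vector_indep_centered[OF X P V \<open>J \<inter> J' = {}\<close>]
      bounded_fun_of_integrable[OF bounded_fun_of_norm_sq[OF PX]]
      bounded_fun_of_integrable[OF bounded_fun_of_inner[OF PX V']]
      bounded_fun_of_integrable[OF bounded_fun_of_norm_sq[OF V']]
    by simp
qed

lemma expectation_norm_sq_sample_matrix_vector_le:
  fixes B :: "'z \<Rightarrow> real^'n^'m" and X :: "'w \<Rightarrow> real^'n"
  assumes X: "vec_fun_of J X" and k: "k \<in> I" "k \<notin> J"
    and B: "B \<in> borel_measurable S" "\<And>z. z \<in> space S \<Longrightarrow> norm (B z) \<le> K"
    and contraction: "\<And>x. (\<integral>z. (norm (B z *v x))\<^sup>2 \<partial>distr M S (Z k)) \<le> q * (norm x)\<^sup>2"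
  shows "expectation (\<lambda>\<omega>. (norm (B (Z k \<omega>) *v X \<omega>))\<^sup>2) \<le> q * expectation (\<lambda>\<omega>. (norm (X \<omega>))\<^sup>2)"
proof -
  (* Writing the square as a quadratic form in X separates the factors that depend on Z k
     from those that depend on X. *)
  define Q where "Q i j l = expectation (\<lambda>\<omega>. B (Z k \<omega>) $ i $ j * B (Z k \<omega>) $ i $ l)" for i j l
  have "mat_fun_of {k} (\<lambda>\<omega>. B (Z k \<omega>))"
    using k B by (intro mat_fun_of_sample) auto
  then have BB: "bounded_fun_of {k} (\<lambda>\<omega>. B (Z k \<omega>) $ i $ j * B (Z k \<omega>) $ i $ l)" for i j l
    by (simp add: mat_fun_of_def vec_fun_of_def bounded_fun_of_mult)
  have XX: "bounded_fun_of J (\<lambda>\<omega>. X \<omega> $ j * X \<omega> $ l)" for j l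
    using X by (simp add: vec_fun_of_def bounded_fun_of_mult)
  have disj: "{k} \<inter> J = {}"
    using k by simp
  have quadratic_form: "(\<Sum>i\<in>UNIV. \<Sum>j\<in>UNIV. \<Sum>l\<in>UNIV. Q i j l * (x $ j * x $ l)) \<le> q * (norm x)\<^sup>2" for x
  proof -
    have "(\<lambda>P::real^'n^'m. (norm (P *v x))\<^sup>2) \<in> borel_measurable borel"
      by (intro borel_measurable_continuous_onI continuous_intros linear_continuous_on
          bounded_linear_matrix_vector_mult_left)
    then have "(\<lambda>z. (norm (B z *v x))\<^sup>2) \<in> borel_measurable S"
      by (rule measurable_compose[OF B(1)])
    then have "(\<integral>z. (norm (B z *v x))\<^sup>2 \<partial>distr M S (Z k)) = expectation (\<lambda>\<omega>. (norm (B (Z k \<omega>) *v x))\<^sup>2)"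
      by (rule integral_distr[OF measurable_samples[OF k(1)]])
    also have "\<dots> = (\<Sum>i\<in>UNIV. \<Sum>j\<in>UNIV. \<Sum>l\<in>UNIV. Q i j l * (x $ j * x $ l))"
      using bounded_fun_of_integrable[OF BB]
      by (simp add: norm_sq_matrix_vector_mult Q_def Bochner_Integration.integral_sum)
    finally show ?thesis
      using contraction[of x] by simp
  qed
  have "expectation (\<lambda>\<omega>. (norm (B (Z k \<omega>) *v X \<omega>))\<^sup>2)
      = (\<Sum>i\<in>UNIV. \<Sum>j\<in>UNIV. \<Sum>l\<in>UNIV. expectation
          (\<lambda>\<omega>. (B (Z k \<omega>) $ i $ j * B (Z k \<omega>) $ i $ l) * (X \<omega> $ j * X \<omega> $ l)))"
    using bounded_fun_of_integrable_mult[OF BB XX]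
    by (simp add: norm_sq_matrix_vector_mult Bochner_Integration.integral_sum)
  also have "\<dots> = (\<Sum>i\<in>UNIV. \<Sum>j\<in>UNIV. \<Sum>l\<in>UNIV. Q i j l * expectation (\<lambda>\<omega>. X \<omega> $ j * X \<omega> $ l))"
    by (simp add: Q_def expectation_mult_indep[OF BB XX disj])
  also have "\<dots> = expectation (\<lambda>\<omega>. \<Sum>i\<in>UNIV. \<Sum>j\<in>UNIV. \<Sum>l\<in>UNIV. Q i j l * (X \<omega> $ j * X \<omega> $ l))"
    using bounded_fun_of_integrable[OF XX] by (simp add: Bochner_Integration.integral_sum)
  also have "\<dots> \<le> expectation (\<lambda>\<omega>. q * (norm (X \<omega>))\<^sup>2)"
    using bounded_fun_of_integrable[OF XX] bounded_fun_of_integrable[OF bounded_fun_of_norm_sq[OF X]]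
      quadratic_form
    by (intro integral_mono) auto
  also have "\<dots> = q * expectation (\<lambda>\<omega>. (norm (X \<omega>))\<^sup>2)"
    by simp
  finally show ?thesis .
qed

end

section \<open>Federated linear stochastic approximation\<close>

definition sample_index :: "nat \<Rightarrow> (nat \<Rightarrow> nat) \<Rightarrow> (nat \<times> nat \<times> nat) set" where
  "sample_index N H = {(c, s, h). c < N \<and> 1 \<le> s \<and> 1 \<le> h \<and> h \<le> H s}"

lemma mem_sample_index [simp]: "(c, s, h) \<in> sample_index N H \<longleftrightarrow> c < N \<and> 1 \<le> s \<and> 1 \<le> h \<and> h \<le> H s"
  by (simp add: sample_index_def)

locale federated_lsa =
  indep_samples M S Z "sample_index N H"
  for M :: "'w measure" and S :: "'z measure" and Z :: "nat \<times> nat \<times> nat \<Rightarrow> 'w \<Rightarrow> 'z"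
    and N :: nat and H :: "nat \<Rightarrow> nat" +
  fixes \<pi> :: "nat \<Rightarrow> 'z measure" and A :: "nat \<Rightarrow> 'z \<Rightarrow> real^'d::finite^'d"
    and b :: "nat \<Rightarrow> 'z \<Rightarrow> real^'d" and \<theta>s :: "nat \<Rightarrow> real^'d"
    and a eta_inf :: real and \<eta> :: "nat \<Rightarrow> real" and K :: real
  assumes N: "N \<ge> 1"
    and pi_prob: "\<And>c. c < N \<Longrightarrow> prob_space (\<pi> c)"
    and pi_sets: "\<And>c. c < N \<Longrightarrow> sets (\<pi> c) = sets S"
    and Z_distr: "\<And>c s h. (c, s, h) \<in> sample_index N H \<Longrightarrow> distr M S (Z (c, s, h)) = \<pi> c"
    and A_meas: "\<And>c. c < N \<Longrightarrow> A c \<in> borel_measurable S"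
    and b_meas: "\<And>c. c < N \<Longrightarrow> b c \<in> borel_measurable S"
    and b_int: "\<And>c. c < N \<Longrightarrow> integrable (\<pi> c) (b c)"
    and A_bounded: "\<And>c z. c < N \<Longrightarrow> z \<in> space S \<Longrightarrow> norm (A c z) \<le> K"
    and eps_bounded: "\<And>c z. c < N \<Longrightarrow> z \<in> space S \<Longrightarrow> norm (eps \<pi> A b \<theta>s c z) \<le> K"
    and a_pos: "a > 0" and eta_inf_a: "eta_inf * a \<le> 1/2"
    and A1: "\<And>c e u. c < N \<Longrightarrow> 0 < e \<Longrightarrow> e < eta_inf \<Longrightarrow>
        sqrt (\<integral>z. (norm ((mat 1 - e *\<^sub>R A c z) *v u))\<^sup>2 \<partial>\<pi> c) \<le> (1 - e * a) * norm u"
    and eta_pos: "\<And>s. 0 < \<eta> s" and eta_le: "\<And>s. \<eta> s \<le> eta_inf"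
begin

abbreviation "\<epsilon> \<equiv> eps \<pi> A b \<theta>s"

abbreviation "\<Gamma> \<omega> c s l r \<equiv> Gam A (\<lambda>c s h. Z (c, s, h) \<omega>) \<eta> c s l r"

abbreviation "\<phi> \<omega> s \<equiv> phiavg N \<pi> A b \<theta>s (\<lambda>c s h. Z (c, s, h) \<omega>) \<eta> H s"

abbreviation "G \<omega> s \<equiv> Gavg N A (\<lambda>c s h. Z (c, s, h) \<omega>) \<eta> H s"

abbreviation "\<theta> \<omega> t \<equiv> theta_fl N \<pi> A b \<theta>s (\<lambda>c s h. Z (c, s, h) \<omega>) \<eta> H t"

lemma eta_a_bounds: "0 < \<eta> s * a" "\<eta> s * a \<le> 1"
proof -
  show "0 < \<eta> s * a"
    using eta_pos a_pos by simp
  have "\<eta> s * a \<le> eta_inf * a"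
    using eta_le a_pos by (simp add: mult_right_mono)
  then show "\<eta> s * a \<le> 1"
    using eta_inf_a by simp
qed

lemma integrable_pi:
  fixes F :: "'z \<Rightarrow> 'b::{banach, second_countable_topology}"
  assumes c: "c < N" and F: "F \<in> borel_measurable S" "\<And>z. z \<in> space S \<Longrightarrow> norm (F z) \<le> L"
  shows "integrable (\<pi> c) F"
proof -
  interpret P: prob_space "\<pi> c"
    using pi_prob c .
  have "F \<in> borel_measurable (\<pi> c)"
    by (subst measurable_cong_sets[OF pi_sets[OF c] refl]) (rule F(1))
  moreover have "space (\<pi> c) = space S"
    using sets_eq_imp_space_eq[OF pi_sets[OF c]] .
  ultimately show ?thesis
    using F(2) by (intro P.integrable_const_bound[where B=L]) auto
qed

lemma eps_measurable:
  assumes c: "c < N"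
  shows "\<epsilon> c \<in> borel_measurable S"
proof -
  have "(\<lambda>P::real^'d^'d. P *v \<theta>s c) \<in> borel_measurable borel"
    by (intro borel_measurable_continuous_onI linear_continuous_on bounded_linear_matrix_vector_mult_left)
  then have "(\<lambda>z. (A c z - Abar \<pi> A c) *v \<theta>s c) \<in> borel_measurable S"
    using measurable_compose[OF borel_measurable_diff[OF A_meas[OF c] borel_measurable_const]] by blast
  then show ?thesis
    unfolding eps_def[abs_def] using b_meas[OF c] by simp
qed

lemma integrable_eps: "c < N \<Longrightarrow> integrable (\<pi> c) (\<epsilon> c)"
  by (rule integrable_pi[OF _ eps_measurable eps_bounded])

lemma integral_eps:
  assumes "c < N"
  shows "(\<integral>z. \<epsilon> c z \<partial>\<pi> c) = 0"
proof -
  interpret P: prob_space "\<pi> c"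
    using pi_prob \<open>c < N\<close> .
  have A: "integrable (\<pi> c) (A c)"
    by (rule integrable_pi[OF assms A_meas A_bounded]) (use assms in auto)
  have Av: "integrable (\<pi> c) (\<lambda>z. A c z *v \<theta>s c)"
    by (rule integrable_bounded_linear[OF bounded_linear_matrix_vector_mult_left A])
  have "(\<integral>z. A c z *v \<theta>s c \<partial>\<pi> c) = Abar \<pi> A c *v \<theta>s c"
    unfolding Abar_def by (rule integral_bounded_linear[OF bounded_linear_matrix_vector_mult_left A])
  moreover have "\<epsilon> c z = (A c z *v \<theta>s c - Abar \<pi> A c *v \<theta>s c) - (b c z - bbar \<pi> b c)" for z
    by (simp add: eps_def matrix_vector_mult_diff_rdistrib)
  ultimately show ?thesis
    using Av b_int[OF assms] by (simp add: bbar_def P.prob_space)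
qed

lemma integral_eps_component: "c < N \<Longrightarrow> (\<integral>z. \<epsilon> c z $ i \<partial>\<pi> c) = 0"
  using integral_bounded_linear[OF bounded_linear_vec_nth integrable_eps] integral_eps by simp

lemma trace_Sigma_eps:
  assumes "c < N"
  shows "mtrace (Sigma_eps \<pi> A b \<theta>s c) = (\<integral>z. (norm (\<epsilon> c z))\<^sup>2 \<partial>\<pi> c)"
proof -
  have "(\<lambda>v::real^'d. outer v) \<in> borel_measurable borel"
    unfolding outer_def by (intro borel_measurable_continuous_onI continuous_intros)
  then have "integrable (\<pi> c) (\<lambda>z. outer (\<epsilon> c z))"
    using assms eps_bounded by (intro integrable_pi[where L="K\<^sup>2"] measurable_compose[OF eps_measurable])
      (auto simp: norm_outer intro: power_mono)
  then have "mtrace (\<integral>z. outer (\<epsilon> c z) \<partial>\<pi> c) = (\<integral>z. mtrace (outer (\<epsilon> c z)) \<partial>\<pi> c)"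
    by (rule integral_bounded_linear[OF bounded_linear_mtrace, symmetric])
  then show ?thesis
    by (simp add: Sigma_eps_def mtrace_outer)
qed

lemma integral_norm_sq_step:
  assumes c: "c < N"
  shows "(\<integral>z. (norm ((mat 1 - e *\<^sub>R A c z) *v u))\<^sup>2 \<partial>\<pi> c)
    = (norm u)\<^sup>2 - 2 * e * (\<integral>z. u \<bullet> (A c z *v u) \<partial>\<pi> c) + e\<^sup>2 * (\<integral>z. (norm (A c z *v u))\<^sup>2 \<partial>\<pi> c)"
proof -
  interpret P: prob_space "\<pi> c"
    using pi_prob c .
  have Au: "integrable (\<pi> c) (\<lambda>z. A c z *v u)"
    by (intro integrable_bounded_linear[OF bounded_linear_matrix_vector_mult_left]
        integrable_pi[OF c A_meas A_bounded]) (use c in auto)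
  have "(\<lambda>P::real^'d^'d. (norm (P *v u))\<^sup>2) \<in> borel_measurable borel"
    by (intro borel_measurable_continuous_onI continuous_intros linear_continuous_on
        bounded_linear_matrix_vector_mult_left)
  then have "(\<lambda>z. (norm (A c z *v u))\<^sup>2) \<in> borel_measurable S"
    by (rule measurable_compose[OF A_meas[OF c]])
  moreover have "norm ((norm (A c z *v u))\<^sup>2) \<le> (K * norm u)\<^sup>2" if "z \<in> space S" for z
  proof -
    have "norm (A c z *v u) \<le> K * norm u"
      using norm_matrix_vector_mult_le[of "A c z" u] mult_right_mono[OF A_bounded[OF c that] norm_ge_zero[of u]]
      by linarith
    then show ?thesis
      by (simp add: power_mono)
  qed
  ultimately have "integrable (\<pi> c) (\<lambda>z. (norm (A c z *v u))\<^sup>2)"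
    by (rule integrable_pi[OF c])
  then show ?thesis
    using Au by (simp add: norm_sq_step_matrix_vector P.prob_space)
qed

lemma integral_norm_sq_step_le:
  assumes c: "c < N" and e: "0 < e" "e \<le> eta_inf"
  shows "(\<integral>z. (norm ((mat 1 - e *\<^sub>R A c z) *v u))\<^sup>2 \<partial>\<pi> c) \<le> (1 - e * a)\<^sup>2 * (norm u)\<^sup>2"
proof -
  (* A1 is assumed only for e < eta_inf, while the step sizes may equal eta_inf; the integral is a
     quadratic polynomial in e, so the bound extends to e = eta_inf by continuity. *)
  define p where "p f = (\<integral>z. (norm ((mat 1 - f *\<^sub>R A c z) *v u))\<^sup>2 \<partial>\<pi> c)" for f
  have strict: "p f \<le> (1 - f * a)\<^sup>2 * (norm u)\<^sup>2" if "0 < f" "f < eta_inf" for f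
    using sqrt_le_D[OF A1[OF c that]] by (simp add: p_def power_mult_distrib)
  show ?thesis
  proof (cases "e < eta_inf")
    case True
    then show ?thesis
      using strict e by (simp add: p_def)
  next
    case False
    then have "e = eta_inf"
      using e by simp
    have "(p \<longlongrightarrow> p eta_inf) (at_left eta_inf)"
      unfolding p_def integral_norm_sq_step[OF c] by (intro tendsto_intros)
    moreover have "((\<lambda>f. (1 - f * a)\<^sup>2 * (norm u)\<^sup>2) \<longlongrightarrow> (1 - eta_inf * a)\<^sup>2 * (norm u)\<^sup>2) (at_left eta_inf)"
      by (intro tendsto_intros)
    moreover have "\<forall>\<^sub>F f in at_left eta_inf. p f \<le> (1 - f * a)\<^sup>2 * (norm u)\<^sup>2"
      using eventually_at_left_real[of 0 eta_inf] e strict by (auto elim: eventually_mono)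
    ultimately have "p eta_inf \<le> (1 - eta_inf * a)\<^sup>2 * (norm u)\<^sup>2"
      by (intro tendsto_le[OF trivial_limit_at_left_real])
    then show ?thesis
      using \<open>e = eta_inf\<close> by (simp add: p_def)
  qed
qed

definition agent_samples :: "nat \<Rightarrow> nat \<Rightarrow> nat \<Rightarrow> (nat \<times> nat \<times> nat) set" where
  "agent_samples c s k = {(c, s, h) | h. 1 \<le> h \<and> h \<le> k}"

lemma agent_samples_subset: "c < N \<Longrightarrow> 1 \<le> s \<Longrightarrow> k \<le> H s \<Longrightarrow> agent_samples c s k \<subseteq> sample_index N H"
  by (auto simp: agent_samples_def)

lemma expectation_sample:
  fixes F :: "'z \<Rightarrow> real"
  assumes "(c, s, h) \<in> sample_index N H" "F \<in> borel_measurable S"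
  shows "expectation (\<lambda>\<omega>. F (Z (c, s, h) \<omega>)) = (\<integral>z. F z \<partial>\<pi> c)"
  using integral_distr[OF measurable_samples[OF assms(1)] assms(2)] Z_distr assms(1) by simp

lemma vec_fun_of_eps_sample:
  assumes "(c, s, h) \<in> J" "J \<subseteq> sample_index N H"
  shows "vec_fun_of J (\<lambda>\<omega>. \<epsilon> c (Z (c, s, h) \<omega>))"
proof -
  have "c < N"
    using assms by auto
  then show ?thesis
    using vec_fun_of_sample[OF assms eps_measurable eps_bounded] by simp
qed

lemma centered_eps_sample:
  assumes "(c, s, h) \<in> sample_index N H"
  shows "centered (\<lambda>\<omega>. \<epsilon> c (Z (c, s, h) \<omega>))"
  using assms expectation_sample[OF assms measurable_compose[OF eps_measurable borel_measurable_nth]]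
  by (simp add: centered_def integral_eps_component)

lemma expectation_norm_sq_eps_sample:
  assumes "(c, s, h) \<in> sample_index N H"
  shows "expectation (\<lambda>\<omega>. (norm (\<epsilon> c (Z (c, s, h) \<omega>)))\<^sup>2) = mtrace (Sigma_eps \<pi> A b \<theta>s c)"
proof -
  have "c < N"
    using assms by auto
  then have "(\<lambda>z. (norm (\<epsilon> c z))\<^sup>2) \<in> borel_measurable S"
    using eps_measurable by measurable
  then show ?thesis
    using expectation_sample[OF assms] trace_Sigma_eps[OF \<open>c < N\<close>] by simp
qed

lemma step_measurable: "c < N \<Longrightarrow> (\<lambda>z. mat 1 - e *\<^sub>R A c z) \<in> borel_measurable S"
  using A_meas by measurable

lemma norm_step_le:
  assumes "c < N" "z \<in> space S"
  shows "norm (mat 1 - e *\<^sub>R A c z) \<le> norm (mat 1 :: real^'d^'d) + \<bar>e\<bar> * K"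
  using norm_triangle_ineq4[of "mat 1" "e *\<^sub>R A c z"] mult_left_mono[OF A_bounded[OF assms], of "\<bar>e\<bar>"]
  by simp

lemma mat_fun_of_step_sample:
  assumes "(c, s, h) \<in> J" "J \<subseteq> sample_index N H"
  shows "mat_fun_of J (\<lambda>\<omega>. mat 1 - e *\<^sub>R A c (Z (c, s, h) \<omega>))"
proof -
  have "c < N"
    using assms by auto
  then show ?thesis
    using mat_fun_of_sample[OF assms step_measurable norm_step_le] by simp
qed

lemma expectation_step_sample_le:
  assumes X: "vec_fun_of J X" and k: "(c, s, h) \<in> sample_index N H" "(c, s, h) \<notin> J"
  shows "expectation (\<lambda>\<omega>. (norm ((mat 1 - \<eta> s *\<^sub>R A c (Z (c, s, h) \<omega>)) *v X \<omega>))\<^sup>2)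
    \<le> (1 - \<eta> s * a)\<^sup>2 * expectation (\<lambda>\<omega>. (norm (X \<omega>))\<^sup>2)"
proof -
  have "c < N"
    using k by auto
  then show ?thesis
    using expectation_norm_sq_sample_matrix_vector_le[OF X k step_measurable norm_step_le]
      integral_norm_sq_step_le[OF _ eta_pos eta_le] Z_distr k(1)
    by simp
qed

lemma mat_fun_of_Gam:
  assumes J: "J \<subseteq> sample_index N H" and steps: "\<And>h. l \<le> h \<Longrightarrow> h \<le> r \<Longrightarrow> (c, s, h) \<in> J"
  shows "mat_fun_of J (\<lambda>\<omega>. \<Gamma> \<omega> c s l r)"
  using steps
proof (induction r)
  case 0
  then have "0 < l"
    using J by fastforce
  then show ?case
    by (simp add: Gam_def lprod_def mat_fun_of_const J)
next
  case (Suc r)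
  show ?case
  proof (cases "l \<le> Suc r")
    case True
    then show ?thesis
      using Suc J by (simp add: Gam_Suc mat_fun_of_matrix_mult mat_fun_of_step_sample)
  next
    case False
    then show ?thesis
      by (simp add: Gam_def lprod_def mat_fun_of_const J)
  qed
qed

lemma expectation_Gam_le:
  assumes X: "vec_fun_of J X" and c: "c < N" and s: "1 \<le> s" and k: "k \<le> H s"
    and disj: "J \<inter> agent_samples c s (H s) = {}"
  shows "expectation (\<lambda>\<omega>. (norm (\<Gamma> \<omega> c s 1 k *v X \<omega>))\<^sup>2)
    \<le> ((1 - \<eta> s * a)\<^sup>2) ^ k * expectation (\<lambda>\<omega>. (norm (X \<omega>))\<^sup>2)"
  using k
proof (induction k)
  case 0
  then show ?case
    by (simp add: Gam_def lprod_def)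
next
  case (Suc k)
  let ?J = "J \<union> agent_samples c s k"
  have J: "?J \<subseteq> sample_index N H"
    using vec_fun_of_subset[OF X] agent_samples_subset[OF c s] Suc by auto
  have "vec_fun_of ?J (\<lambda>\<omega>. \<Gamma> \<omega> c s 1 k *v X \<omega>)"
    using J by (intro vec_fun_of_matrix_vector_mult mat_fun_of_Gam vec_fun_of_mono[OF X])
      (auto simp: agent_samples_def)
  moreover have "(c, s, Suc k) \<in> sample_index N H" "(c, s, Suc k) \<notin> ?J"
    using c s Suc disj by (auto simp: agent_samples_def)
  ultimately have "expectation (\<lambda>\<omega>. (norm (\<Gamma> \<omega> c s 1 (Suc k) *v X \<omega>))\<^sup>2)
      \<le> (1 - \<eta> s * a)\<^sup>2 * expectation (\<lambda>\<omega>. (norm (\<Gamma> \<omega> c s 1 k *v X \<omega>))\<^sup>2)"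
    by (simp add: Gam_Suc expectation_step_sample_le flip: matrix_vector_mul_assoc)
  also have "\<dots> \<le> (1 - \<eta> s * a)\<^sup>2 * (((1 - \<eta> s * a)\<^sup>2) ^ k * expectation (\<lambda>\<omega>. (norm (X \<omega>))\<^sup>2))"
    using Suc by (intro mult_left_mono) auto
  finally show ?case
    by simp
qed

definition local_noise :: "nat \<Rightarrow> nat \<Rightarrow> nat \<Rightarrow> 'w \<Rightarrow> real^'d" where
  "local_noise c s k \<omega> = (\<Sum>h=1..k. \<Gamma> \<omega> c s (h + 1) k *v \<epsilon> c (Z (c, s, h) \<omega>))"

lemma local_noise_0: "local_noise c s 0 = (\<lambda>_. 0)"
  by (simp add: local_noise_def fun_eq_iff)

lemma local_noise_Suc:
  "local_noise c s (Suc k) = (\<lambda>\<omega>. (mat 1 - \<eta> s *\<^sub>R A c (Z (c, s, Suc k) \<omega>)) *v local_noise c s k \<omega>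
     + \<epsilon> c (Z (c, s, Suc k) \<omega>))"
proof
  fix \<omega>
  have "\<Gamma> \<omega> c s (h + 1) (Suc k) = (mat 1 - \<eta> s *\<^sub>R A c (Z (c, s, Suc k) \<omega>)) ** \<Gamma> \<omega> c s (h + 1) k"
    if "h \<le> k" for h
    using that by (simp add: Gam_Suc)
  moreover have "\<Gamma> \<omega> c s (Suc k + 1) (Suc k) = mat 1"
    by (simp add: Gam_def lprod_def)
  ultimately show "local_noise c s (Suc k) \<omega> = (mat 1 - \<eta> s *\<^sub>R A c (Z (c, s, Suc k) \<omega>)) *v local_noise c s k \<omega>
     + \<epsilon> c (Z (c, s, Suc k) \<omega>)"
    by (simp add: local_noise_def matrix_vector_mult_sum_right matrix_vector_mul_assoc)
qed

lemma vec_fun_of_local_noise: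
  assumes c: "c < N" and s: "1 \<le> s"
  shows "k \<le> H s \<Longrightarrow> vec_fun_of (agent_samples c s k) (local_noise c s k)"
proof (induction k)
  case 0
  then show ?case
    using agent_samples_subset[OF c s] by (simp add: local_noise_0 vec_fun_of_const)
next
  case (Suc k)
  have J: "agent_samples c s (Suc k) \<subseteq> sample_index N H" "(c, s, Suc k) \<in> agent_samples c s (Suc k)"
    using agent_samples_subset[OF c s Suc.prems] by (auto simp: agent_samples_def)
  moreover have "vec_fun_of (agent_samples c s (Suc k)) (local_noise c s k)"
    using Suc J by (intro vec_fun_of_mono[OF Suc.IH]) (auto simp: agent_samples_def)
  ultimately show ?case
    unfolding local_noise_Suc
    by (intro vec_fun_of_add vec_fun_of_matrix_vector_mult mat_fun_of_step_sample vec_fun_of_eps_sample)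
qed

lemma centered_local_noise:
  assumes c: "c < N" and s: "1 \<le> s"
  shows "k \<le> H s \<Longrightarrow> centered (local_noise c s k)"
proof (induction k)
  case 0
  then show ?case
    by (simp add: local_noise_0 centered_def)
next
  case (Suc k)
  have k: "(c, s, Suc k) \<in> sample_index N H" "agent_samples c s k \<inter> {(c, s, Suc k)} = {}"
    using c s Suc.prems by (auto simp: agent_samples_def)
  show ?case
    unfolding local_noise_Suc
    using Suc vec_fun_of_local_noise[OF c s] k
    by (intro centered_matrix_vector_add[of "agent_samples c s k" _ "{(c, s, Suc k)}"]
        mat_fun_of_step_sample vec_fun_of_eps_sample centered_eps_sample) auto
qed

lemma expectation_norm_sq_local_noise_le:
  assumes c: "c < N" and s: "1 \<le> s"
  shows "k \<le> H s \<Longrightarrow> expectation (\<lambda>\<omega>. (norm (local_noise c s k \<omega>))\<^sup>2)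
    \<le> min (real k) (1 / (\<eta> s * a)) * mtrace (Sigma_eps \<pi> A b \<theta>s c)"
proof (induction k)
  case 0
  then show ?case
    using eta_a_bounds[of s] by (simp add: local_noise_0)
next
  case (Suc k)
  let ?u = "local_noise c s k" and ?tr = "mtrace (Sigma_eps \<pi> A b \<theta>s c)"
  let ?B = "\<lambda>\<omega>. mat 1 - \<eta> s *\<^sub>R A c (Z (c, s, Suc k) \<omega>)"
  have k: "(c, s, Suc k) \<in> sample_index N H" "agent_samples c s k \<inter> {(c, s, Suc k)} = {}"
    "(c, s, Suc k) \<notin> agent_samples c s k"
    using c s Suc.prems by (auto simp: agent_samples_def)
  have u: "vec_fun_of (agent_samples c s k) ?u" "centered ?u"
    using vec_fun_of_local_noise[OF c s] centered_local_noise[OF c s] Suc.prems by auto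
  have "expectation (\<lambda>\<omega>. (norm (local_noise c s (Suc k) \<omega>))\<^sup>2)
      = expectation (\<lambda>\<omega>. (norm (?B \<omega> *v ?u \<omega>))\<^sup>2) + ?tr"
    unfolding local_noise_Suc
    using expectation_norm_sq_matrix_vector_add[OF u mat_fun_of_step_sample vec_fun_of_eps_sample k(2)]
      expectation_norm_sq_eps_sample[OF k(1)] k(1)
    by simp
  also have "\<dots> \<le> (1 - \<eta> s * a)\<^sup>2 * (min (real k) (1 / (\<eta> s * a)) * ?tr) + ?tr"
    using expectation_step_sample_le[OF u(1) k(1,3)] mult_left_mono[OF Suc.IH, of "(1 - \<eta> s * a)\<^sup>2"]
      Suc.prems by simp
  also have "\<dots> = ((1 - \<eta> s * a)\<^sup>2 * min (real k) (1 / (\<eta> s * a)) + 1) * ?tr"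
    by (simp add: algebra_simps)
  also have "\<dots> \<le> min (real (Suc k)) (1 / (\<eta> s * a)) * ?tr"
    using min_contraction_step[of "\<eta> s * a" "real k"] eta_a_bounds trace_Sigma_eps[OF c]
    by (intro mult_right_mono) (auto simp: integral_nonneg_AE)
  finally show ?case .
qed

definition round_samples :: "nat \<Rightarrow> nat \<Rightarrow> (nat \<times> nat \<times> nat) set" where
  "round_samples s m = {(c, s, h) | c h. c < m \<and> 1 \<le> h \<and> h \<le> H s}"

lemma round_samples_subset: "m \<le> N \<Longrightarrow> 1 \<le> s \<Longrightarrow> round_samples s m \<subseteq> sample_index N H"
  by (auto simp: round_samples_def)

lemma vec_fun_of_local_noise_round:
  assumes "c < m" "m \<le> N" "1 \<le> s"
  shows "vec_fun_of (round_samples s m) (local_noise c s (H s))"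
proof (rule vec_fun_of_mono[OF vec_fun_of_local_noise])
  show "agent_samples c s (H s) \<subseteq> round_samples s m"
    using assms by (auto simp: agent_samples_def round_samples_def)
qed (use assms round_samples_subset in auto)

lemma expectation_norm_sq_local_noise_sum:
  assumes s: "1 \<le> s"
  shows "m \<le> N \<Longrightarrow> expectation (\<lambda>\<omega>. (norm (\<Sum>c<m. local_noise c s (H s) \<omega>))\<^sup>2)
    = (\<Sum>c<m. expectation (\<lambda>\<omega>. (norm (local_noise c s (H s) \<omega>))\<^sup>2))"
proof (induction m)
  case 0
  then show ?case
    by simp
next
  case (Suc m)
  let ?X = "\<lambda>\<omega>. \<Sum>c<m. local_noise c s (H s) \<omega>" and ?J = "agent_samples m s (H s)"
  have X: "vec_fun_of (round_samples s m) ?X" "centered ?X"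
    using Suc.prems s round_samples_subset[of m s]
    by (auto intro!: vec_fun_of_sum centered_sum[where J="round_samples s m"]
        vec_fun_of_local_noise_round centered_local_noise)
  have u: "vec_fun_of ?J (local_noise m s (H s))"
    using Suc.prems s by (intro vec_fun_of_local_noise) auto
  have "mat_fun_of ?J (\<lambda>_. mat 1 :: real^'d^'d)"
    using Suc.prems s by (intro mat_fun_of_const agent_samples_subset) auto
  moreover have "round_samples s m \<inter> ?J = {}"
    by (auto simp: round_samples_def agent_samples_def)
  ultimately show ?case
    using expectation_norm_sq_matrix_vector_add[OF X _ u, of "\<lambda>_. mat 1"] Suc by simp
qed

lemma phiavg_eq: "\<phi> \<omega> s = (- \<eta> s / real N) *\<^sub>R (\<Sum>c<N. local_noise c s (H s) \<omega>)"
  by (simp add: phiavg_def local_noise_def scaleR_sum_right sum_negf)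

lemma vec_fun_of_phiavg: "1 \<le> s \<Longrightarrow> vec_fun_of (round_samples s N) (\<lambda>\<omega>. \<phi> \<omega> s)"
  unfolding phiavg_eq using round_samples_subset[of N s]
  by (intro vec_fun_of_scaleR vec_fun_of_sum vec_fun_of_local_noise_round) auto

lemma centered_phiavg: "1 \<le> s \<Longrightarrow> centered (\<lambda>\<omega>. \<phi> \<omega> s)"
  unfolding phiavg_eq
  by (intro centered_scaleR centered_sum[where J="round_samples s N"] vec_fun_of_local_noise_round
      centered_local_noise) auto

lemma expectation_norm_sq_phiavg_le:
  assumes s: "1 \<le> s"
  shows "expectation (\<lambda>\<omega>. (norm (\<phi> \<omega> s))\<^sup>2)
    \<le> min (real (H s) * (\<eta> s)\<^sup>2) (\<eta> s / a) * sigma_bar_sq N \<pi> A b \<theta>s / real N"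
proof -
  let ?L = "min (real (H s)) (1 / (\<eta> s * a))" and ?tr = "\<lambda>c. mtrace (Sigma_eps \<pi> A b \<theta>s c)"
  have "expectation (\<lambda>\<omega>. (norm (\<phi> \<omega> s))\<^sup>2)
      = (\<eta> s / real N)\<^sup>2 * (\<Sum>c<N. expectation (\<lambda>\<omega>. (norm (local_noise c s (H s) \<omega>))\<^sup>2))"
    using expectation_norm_sq_local_noise_sum[OF s order.refl]
    by (simp add: phiavg_eq power_mult_distrib power_divide)
  also have "\<dots> \<le> (\<eta> s / real N)\<^sup>2 * (\<Sum>c<N. ?L * ?tr c)"
    using s by (intro mult_left_mono sum_mono expectation_norm_sq_local_noise_le) auto
  also have "\<dots> = (\<eta> s)\<^sup>2 * ?L * sigma_bar_sq N \<pi> A b \<theta>s / real N"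
    using N by (simp add: sigma_bar_sq_def power2_eq_square sum_distrib_left field_simps)
  also have "(\<eta> s)\<^sup>2 * ?L = min (real (H s) * (\<eta> s)\<^sup>2) (\<eta> s / a)"
    using eta_pos[of s] a_pos by (simp add: min_mult_distrib_left power2_eq_square field_simps)
  finally show ?thesis .
qed

lemma mat_fun_of_Gavg: "1 \<le> s \<Longrightarrow> mat_fun_of (round_samples s N) (\<lambda>\<omega>. G \<omega> s)"
  unfolding Gavg_def using round_samples_subset[of N s]
  by (intro mat_fun_of_scaleR mat_fun_of_sum mat_fun_of_Gam) (auto simp: round_samples_def)

lemma expectation_Gavg_le:
  assumes X: "vec_fun_of J X" and s: "1 \<le> s" and disj: "J \<inter> round_samples s N = {}"
  shows "expectation (\<lambda>\<omega>. (norm (G \<omega> s *v X \<omega>))\<^sup>2)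
    \<le> ((1 - \<eta> s * a)\<^sup>2) ^ H s * expectation (\<lambda>\<omega>. (norm (X \<omega>))\<^sup>2)"
proof -
  let ?q = "((1 - \<eta> s * a)\<^sup>2) ^ H s"
  have J: "J \<union> round_samples s N \<subseteq> sample_index N H"
    using vec_fun_of_subset[OF X] round_samples_subset[of N s] s by auto
  have G_eq: "G \<omega> s *v X \<omega> = (1 / real N) *\<^sub>R (\<Sum>c<N. \<Gamma> \<omega> c s 1 (H s) *v X \<omega>)" for \<omega>
    by (simp add: Gavg_def matrix_vector_mult_sum_left flip: scaleR_matrix_vector_assoc)
  have GX: "vec_fun_of (J \<union> round_samples s N) (\<lambda>\<omega>. \<Gamma> \<omega> c s 1 (H s) *v X \<omega>)" if "c < N" for c
    using that J by (intro vec_fun_of_matrix_vector_mult mat_fun_of_Gam vec_fun_of_mono[OF X])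
      (auto simp: round_samples_def)
  have "integrable M (\<lambda>\<omega>. (norm (G \<omega> s *v X \<omega>))\<^sup>2)"
    by (rule bounded_fun_of_integrable[OF bounded_fun_of_norm_sq[OF
          vec_fun_of_matrix_vector_mult_Un[OF mat_fun_of_Gavg[OF s] X]]])
  moreover have "integrable M (\<lambda>\<omega>. (1 / real N) * (\<Sum>c<N. (norm (\<Gamma> \<omega> c s 1 (H s) *v X \<omega>))\<^sup>2))"
    using GX by (intro integrable_mult_right Bochner_Integration.integrable_sum bounded_fun_of_integrable
        bounded_fun_of_norm_sq) auto
  ultimately have "expectation (\<lambda>\<omega>. (norm (G \<omega> s *v X \<omega>))\<^sup>2)
      \<le> expectation (\<lambda>\<omega>. (1 / real N) * (\<Sum>c<N. (norm (\<Gamma> \<omega> c s 1 (H s) *v X \<omega>))\<^sup>2))"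
    unfolding G_eq by (intro integral_mono norm_sq_average_le N)
  also have "\<dots> = (1 / real N) * (\<Sum>c<N. expectation (\<lambda>\<omega>. (norm (\<Gamma> \<omega> c s 1 (H s) *v X \<omega>))\<^sup>2))"
    using bounded_fun_of_integrable[OF bounded_fun_of_norm_sq[OF GX]]
    by (simp add: Bochner_Integration.integral_sum)
  also have "\<dots> \<le> (1 / real N) * (\<Sum>c<N. ?q * expectation (\<lambda>\<omega>. (norm (X \<omega>))\<^sup>2))"
    using disj s by (intro mult_left_mono sum_mono expectation_Gam_le[OF X])
      (auto simp: agent_samples_def round_samples_def)
  also have "\<dots> = ?q * expectation (\<lambda>\<omega>. (norm (X \<omega>))\<^sup>2)"
    using N by simp
  finally show ?thesis .
qed

definition samples_upto :: "nat \<Rightarrow> (nat \<times> nat \<times> nat) set" where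
  "samples_upto t = {(c, s, h) \<in> sample_index N H. s \<le> t}"

lemma samples_upto_subset: "samples_upto t \<subseteq> sample_index N H"
  by (auto simp: samples_upto_def)

lemma samples_upto_disjoint_round_samples: "samples_upto t \<inter> round_samples (Suc t) N = {}"
  by (auto simp: samples_upto_def round_samples_def)

lemma vec_fun_of_theta_fl: "vec_fun_of (samples_upto t) (\<lambda>\<omega>. \<theta> \<omega> t)"
proof (induction t)
  case 0
  then show ?case
    by (simp add: theta_fl_0 vec_fun_of_const samples_upto_subset)
next
  case (Suc t)
  have "samples_upto t \<subseteq> samples_upto (Suc t)" "round_samples (Suc t) N \<subseteq> samples_upto (Suc t)"
    by (auto simp: samples_upto_def round_samples_def)
  then show ?case
    unfolding theta_fl_Suc
    by (intro vec_fun_of_add vec_fun_of_matrix_vector_mult mat_fun_of_mono[OF mat_fun_of_Gavg]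
        vec_fun_of_mono[OF Suc.IH] vec_fun_of_mono[OF vec_fun_of_phiavg] samples_upto_subset) auto
qed

lemma centered_theta_fl: "centered (\<lambda>\<omega>. \<theta> \<omega> t)"
proof (induction t)
  case 0
  then show ?case
    by (simp add: theta_fl_0 centered_def)
next
  case (Suc t)
  show ?case
    unfolding theta_fl_Suc
    by (rule centered_matrix_vector_add[OF vec_fun_of_theta_fl Suc.IH mat_fun_of_Gavg vec_fun_of_phiavg
          centered_phiavg samples_upto_disjoint_round_samples]) simp_all
qed

lemma expectation_norm_sq_theta_fl_le:
  "expectation (\<lambda>\<omega>. (norm (\<theta> \<omega> t))\<^sup>2)
    \<le> (\<Sum>s=1..t. exp (- 2 * a * (\<Sum>i=s+1..t. \<eta> i * real (H i)))
          * (min (real (H s) * (\<eta> s)\<^sup>2) (\<eta> s / a) * sigma_bar_sq N \<pi> A b \<theta>s / real N))"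
  (is "_ \<le> ?bound t")
proof (induction t)
  case 0
  then show ?case
    by (simp add: theta_fl_0)
next
  case (Suc t)
  let ?G = "\<lambda>\<omega>. G \<omega> (Suc t)" and ?q = "exp (- 2 * a * (\<eta> (Suc t) * real (H (Suc t))))"
  have "0 \<le> expectation (\<lambda>\<omega>. (norm (\<theta> \<omega> t))\<^sup>2)"
    by (rule integral_nonneg_AE) simp
  then have "0 \<le> ?bound t"
    using Suc.IH by linarith
  have "expectation (\<lambda>\<omega>. (norm (?G \<omega> *v \<theta> \<omega> t))\<^sup>2)
      \<le> ((1 - \<eta> (Suc t) * a)\<^sup>2) ^ H (Suc t) * expectation (\<lambda>\<omega>. (norm (\<theta> \<omega> t))\<^sup>2)"
    by (rule expectation_Gavg_le[OF vec_fun_of_theta_fl _ samples_upto_disjoint_round_samples]) simp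
  also have "\<dots> \<le> ?q * ?bound t"
    using power_one_minus_sq_le_exp[OF less_imp_le[OF eta_a_bounds(1)] eta_a_bounds(2), of "Suc t" "H (Suc t)"]
      Suc.IH \<open>0 \<le> ?bound t\<close>
    by (intro mult_mono) (auto simp: mult_ac)
  finally have "expectation (\<lambda>\<omega>. (norm (\<theta> \<omega> (Suc t)))\<^sup>2)
      \<le> ?q * ?bound t + expectation (\<lambda>\<omega>. (norm (\<phi> \<omega> (Suc t)))\<^sup>2)"
    unfolding theta_fl_Suc
    using expectation_norm_sq_matrix_vector_add[OF vec_fun_of_theta_fl centered_theta_fl mat_fun_of_Gavg
        vec_fun_of_phiavg samples_upto_disjoint_round_samples]
    by simp
  also have "\<dots> \<le> ?q * ?bound t
      + min (real (H (Suc t)) * (\<eta> (Suc t))\<^sup>2) (\<eta> (Suc t) / a) * sigma_bar_sq N \<pi> A b \<theta>s / real N"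
    using expectation_norm_sq_phiavg_le[of "Suc t"] by simp
  also have "\<dots> = ?bound (Suc t)"
    by (rule discounted_sum_Suc[symmetric])
  finally show ?case .
qed

end

theorem lemma4:
  fixes N :: nat and S :: "'z measure" and \<pi> :: "nat \<Rightarrow> 'z measure"
    and A :: "nat \<Rightarrow> 'z \<Rightarrow> real^'d::finite^'d" and b :: "nat \<Rightarrow> 'z \<Rightarrow> real^'d"
    and \<theta>s :: "nat \<Rightarrow> real^'d"
    and a eta_inf :: real and \<eta> :: "nat \<Rightarrow> real" and H :: "nat \<Rightarrow> nat"
    and M :: "'w measure" and Zs :: "nat \<Rightarrow> nat \<Rightarrow> nat \<Rightarrow> 'w \<Rightarrow> 'z"
    and t :: nat
  assumes N: "N \<ge> 1"
    and pi_prob: "\<And>c. c < N \<Longrightarrow> prob_space (\<pi> c)"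
    and pi_sets: "\<And>c. c < N \<Longrightarrow> sets (\<pi> c) = sets S"
    and A_meas: "\<And>c. c < N \<Longrightarrow> A c \<in> borel_measurable S"
    and b_meas: "\<And>c. c < N \<Longrightarrow> b c \<in> borel_measurable S"
    and b_int: "\<And>c. c < N \<Longrightarrow> integrable (\<pi> c) (b c)"
    and theta_star: "\<And>c. c < N \<Longrightarrow> Abar \<pi> A c *v \<theta>s c = bbar \<pi> b c"
    \<comment> \<open>Assumption A1(2)\<close>
    and hurw: "\<And>c. c < N \<Longrightarrow> hurwitz (- Abar \<pi> A c)"
    and a_pos: "a > 0" and eta_inf_pos: "eta_inf > 0" and eta_inf_a: "eta_inf * a \<le> 1/2"
    and A1: "\<And>c e u. c < N \<Longrightarrow> 0 < e \<Longrightarrow> e < eta_inf \<Longrightarrow>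
        sqrt (integral\<^sup>L (\<pi> c) (\<lambda>z. (norm ((mat 1 - e *\<^sub>R A c z) *v u))\<^sup>2)) \<le> (1 - e * a) * norm u"
    \<comment> \<open>Assumption A2\<close>
    and M_prob: "prob_space M"
    and Zs_meas: "\<And>c s h. c < N \<Longrightarrow> 1 \<le> s \<Longrightarrow> 1 \<le> h \<Longrightarrow> h \<le> H s \<Longrightarrow> Zs c s h \<in> measurable M S"
    and Zs_distr: "\<And>c s h. c < N \<Longrightarrow> 1 \<le> s \<Longrightarrow> 1 \<le> h \<Longrightarrow> h \<le> H s \<Longrightarrow> distr M S (Zs c s h) = \<pi> c"
    and Zs_indep: "prob_space.indep_vars M (\<lambda>_. S) (\<lambda>(c, s, h). Zs c s h)
                     {(c, s, h). c < N \<and> 1 \<le> s \<and> 1 \<le> h \<and> h \<le> H s}"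
    and eps_bdd: "\<exists>K. \<forall>c<N. \<forall>z\<in>space S. norm (eps \<pi> A b \<theta>s c z) \<le> K"
    and A_bdd: "\<exists>K. \<forall>c<N. \<forall>z\<in>space S. norm (A c z) \<le> K \<and> norm (A c z - Abar \<pi> A c) \<le> K"
    \<comment> \<open>step sizes and local step numbers\<close>
    and H_pos: "\<And>s. H s \<ge> 1"
    and eta_pos: "\<And>s. 0 < \<eta> s" and eta_le: "\<And>s. \<eta> s \<le> eta_inf"
    and t: "t \<ge> 1"
  shows "integral\<^sup>L M (\<lambda>\<omega>. (norm (theta_fl N \<pi> A b \<theta>s (\<lambda>c s h. Zs c s h \<omega>) \<eta> H t))\<^sup>2)
    \<le> (\<Sum>s=1..t. exp (- 2 * a * (\<Sum>i=s+1..t. \<eta> i * real (H i)))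
          * min (real (H s) * (\<eta> s)\<^sup>2) (\<eta> s / a) * sigma_bar_sq N \<pi> A b \<theta>s / real N)"
proof -
  obtain K1 where K1: "\<And>c z. c < N \<Longrightarrow> z \<in> space S \<Longrightarrow> norm (eps \<pi> A b \<theta>s c z) \<le> K1"
    using eps_bdd by blast
  obtain K2 where K2: "\<And>c z. c < N \<Longrightarrow> z \<in> space S \<Longrightarrow> norm (A c z) \<le> K2"
    using A_bdd by blast
  have K: "norm (A c z) \<le> max K1 K2" "norm (eps \<pi> A b \<theta>s c z) \<le> max K1 K2"
    if "c < N" "z \<in> space S" for c z
    using K1[OF that] K2[OF that] by (simp_all add: le_max_iff_disj)
  have "indep_samples M S (\<lambda>(c, s, h). Zs c s h) (sample_index N H)"
    using M_prob Zs_indep by (simp add: indep_samples_def indep_samples_axioms_def sample_index_def)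
  then interpret F: federated_lsa M S "\<lambda>(c, s, h). Zs c s h" N H \<pi> A b \<theta>s a eta_inf \<eta> "max K1 K2"
    by (intro federated_lsa.intro federated_lsa_axioms.intro)
      (use N pi_prob pi_sets Zs_distr A_meas b_meas b_int a_pos eta_inf_a A1 eta_pos eta_le K in simp_all)
  show ?thesis
    using F.expectation_norm_sq_theta_fl_le[of t] by (simp add: mult.assoc)
qed

end
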